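(* Let $\mathcal{A}$, $H(\mathcal{A})$, $H(\mathcal{A}^* )$ be as in the context, and let $a,b'$ be non-negative integers. Define $$S=\sum_\alpha(-1)^{|\alpha|}e_\alpha\otimes e^\alpha\in H(\mathcal{A})^{\otimes2},\quad \tilde S=\sum_\alpha\tilde e_\alpha\otimes\tilde e^\alpha\in H(\mathcal{A}^* )^{\otimes2},$$ $$S'=\sum_\alpha(-1)^{(a+b'+1)|\alpha|}\tilde e_\alpha\otimes e^\alpha\in H(\mathcal{A}^* )\otimes H(\mathcal{A}),\quad S''=\sum_\alpha(-1)^{(a+b')|\alpha|}e_\alpha\otimes\tilde e^\alpha\in H(\mathcal{A})\otimes H(\mathcal{A}^* ).$$ Then, with leg-numbering notation $X_{ij}$ placing the two tensor factors of $X$ in positions $i,j$ of a triple tensor product (with the appropriate algebra $H(\mathcal{A})$ or $H(\mathcal{A}^* )$ in each position) and $1$ elsewhere, the following hold: $$S'_{12}S'_{13}S_{23}=S_{23}S'_{12},\qquad \tilde S_{12}S'_{23}=S'_{23}S'_{13}\tilde S_{12},$$ $$S_{12}S''_{13}S''_{23}=S''_{23}S_{12},\qquad S''_{12}\tilde S_{23}=\tilde S_{23}S''_{13}S''_{12},$$ $$S'_{12}\tilde S_{13}S''_{23}=S''_{23}S'_{12},\qquad S''_{12}S'_{23}=S'_{23}S_{13}S''_{12}.$$ Moreover $\tilde S$ satisfies $\tilde S_{12}\tilde S_{23}=\tilde S_{23}\tilde S_{13}\tilde S_{12}$.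
   Context: Graded tensor products: $(a_1\otimes b_1)(a_2\otimes b_2)=(-1)^{|b_1||a_2|}a_1a_2\otimes b_1b_2$. $\mathcal{A}$ is a $\mathbb{Z}_2$-graded Hopf algebra over $\mathbb{C}$ with homogeneous basis $e_\alpha$ of degree $|\alpha|$, $e_\alpha e_\beta=\sum_\gamma m^\gamma_{\alpha\beta}e_\gamma$, $\Delta(e_\alpha)=\sum\mu^{\beta\gamma}_\alpha e_\beta\otimes e_\gamma$; $\mathcal{A}^*$ is the dual Hopf algebra with dual basis $e^\alpha$. The Heisenberg double $H(\mathcal{A})$ is spanned by $e^\alpha\otimes e_\beta$ with product $(e^\alpha\otimes e_\beta)(e^\gamma\otimes e_\delta)=\sum(-1)^{|\beta||\gamma|+|\pi||\epsilon|+|\pi||\alpha|+|\epsilon|}m^\gamma_{\pi\epsilon}m^\tau_{\rho\delta}\mu^{\epsilon\rho}_\beta\mu^{\alpha\pi}_\sigma e^\sigma\otimes e_\tau$; write $e_\alpha=1\otimes e_\alpha$, $e^\alpha=e^\alpha\otimes1$. The Heisenberg double $H(\mathcal{A}^* )$ is spanned by $\tilde e_\alpha\otimes\tilde e^\beta$ with product $(\tilde e_\alpha\otimes\tilde e^\beta)(\tilde e_\gamma\otimes\tilde e^\delta)=\sum(-1)^{|\rho||\pi|+|\rho||\epsilon|+|\pi||\delta|}\mu^{\rho\epsilon}_\gamma\mu^{\pi\delta}_\tau m^\beta_{\epsilon\pi}m^\sigma_{\alpha\rho}\tilde e_\sigma\otimes\tilde e^\tau$; write $\tilde e_\alpha=\tilde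 e_\alpha\otimes1$, $\tilde e^\alpha=1\otimes\tilde e^\alpha$, of degree $|\alpha|$. In the six identities, the positions carry: first identity $H(\mathcal{A}^* ),H(\mathcal{A}),H(\mathcal{A})$; second $H(\mathcal{A}^* ),H(\mathcal{A}^* ),H(\mathcal{A})$; third $H(\mathcal{A}),H(\mathcal{A}),H(\mathcal{A}^* )$; fourth $H(\mathcal{A}),H(\mathcal{A}^* ),H(\mathcal{A}^* )$; fifth $H(\mathcal{A}^* ),H(\mathcal{A}),H(\mathcal{A}^* )$; sixth $H(\mathcal{A}),H(\mathcal{A}^* ),H(\mathcal{A})$. *)

theory Defs
  imports Complex_Main
begin

text \<open>A finite-dimensional Z2-graded Hopf algebra over the complex numbers, given by
structure constants with respect to a homogeneous basis indexed by a finite type 'i.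
Conventions:
  deg a          = degree |a| (0 or 1) of the basis element e_a
  m c a b        = m^c_{ab}, i.e. e_a e_b = sum_c m c a b e_c
  mu a b c       = mu_a^{bc}, i.e. Delta(e_a) = sum mu a b c e_b (x) e_c
  u a            = coefficient of e_a in the unit 1
  eps a          = counit of e_a
  s a b          = coefficient of e_b in the antipode S(e_a).
Delta is multiplicative for the graded tensor product
(a1 (x) b1)(a2 (x) b2) = (-1)^(|b1||a2|) a1a2 (x) b1b2.\<close>

definition graded_hopf ::
  "('i::finite \<Rightarrow> nat) \<Rightarrow> ('i \<Rightarrow> 'i \<Rightarrow> 'i \<Rightarrow> complex) \<Rightarrow> ('i \<Rightarrow> 'i \<Rightarrow> 'i \<Rightarrow> complex)
   \<Rightarrow> ('i \<Rightarrow> complex) \<Rightarrow> ('i \<Rightarrow> complex) \<Rightarrow> ('i \<Rightarrow> 'i \<Rightarrow> complex) \<Rightarrow> bool" where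
  "graded_hopf deg m mu u eps s \<longleftrightarrow>
    (\<forall>x. deg x < 2) \<and>
    (\<forall>c a b. m c a b \<noteq> 0 \<longrightarrow> deg c mod 2 = (deg a + deg b) mod 2) \<and>
    (\<forall>a b c. mu a b c \<noteq> 0 \<longrightarrow> deg a mod 2 = (deg b + deg c) mod 2) \<and>
    (\<forall>x. u x \<noteq> 0 \<longrightarrow> deg x = 0) \<and>
    (\<forall>x. eps x \<noteq> 0 \<longrightarrow> deg x = 0) \<and>
    (\<forall>a b. s a b \<noteq> 0 \<longrightarrow> deg a = deg b) \<and>
    (\<forall>a b c d. (\<Sum>k\<in>UNIV. m k a b * m d k c) = (\<Sum>k\<in>UNIV. m k b c * m d a k)) \<and>
    (\<forall>a c. (\<Sum>k\<in>UNIV. u k * m c k a) = (if a = c then 1 else 0) \<and>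
           (\<Sum>k\<in>UNIV. u k * m c a k) = (if a = c then 1 else 0)) \<and>
    (\<forall>a x y z. (\<Sum>k\<in>UNIV. mu a k z * mu k x y) = (\<Sum>k\<in>UNIV. mu a x k * mu k y z)) \<and>
    (\<forall>a b. (\<Sum>k\<in>UNIV. eps k * mu a k b) = (if a = b then 1 else 0) \<and>
           (\<Sum>k\<in>UNIV. eps k * mu a b k) = (if a = b then 1 else 0)) \<and>
    (\<forall>a b x y. (\<Sum>k\<in>UNIV. m k a b * mu k x y) =
        (\<Sum>b1\<in>UNIV. \<Sum>g1\<in>UNIV. \<Sum>b2\<in>UNIV. \<Sum>g2\<in>UNIV.
            (-1) ^ (deg g1 * deg b2) * mu a b1 g1 * mu b b2 g2 * m x b1 b2 * m y g1 g2)) \<and>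
    (\<forall>x y. (\<Sum>k\<in>UNIV. u k * mu k x y) = u x * u y) \<and>
    (\<forall>a b. (\<Sum>k\<in>UNIV. m k a b * eps k) = eps a * eps b) \<and>
    (\<Sum>k\<in>UNIV. u k * eps k) = 1 \<and>
    (\<forall>a x. (\<Sum>b\<in>UNIV. \<Sum>c\<in>UNIV. \<Sum>d\<in>UNIV. mu a b c * s b d * m x d c) = eps a * u x \<and>
           (\<Sum>b\<in>UNIV. \<Sum>c\<in>UNIV. \<Sum>d\<in>UNIV. mu a b c * s c d * m x b d) = eps a * u x)"

text \<open>Heisenberg double H(A): basis (si,ta) stands for e^si (x) e_ta.
HA_mult x y z = coefficient of basis element z in the product x y.\<close>

definition HA_mult ::
  "('i::finite \<Rightarrow> nat) \<Rightarrow> ('i \<Rightarrow> 'i \<Rightarrow> 'i \<Rightarrow> complex) \<Rightarrow> ('i \<Rightarrow> 'i \<Rightarrow> 'i \<Rightarrow> complex)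
   \<Rightarrow> 'i \<times> 'i \<Rightarrow> 'i \<times> 'i \<Rightarrow> 'i \<times> 'i \<Rightarrow> complex" where
  "HA_mult deg m mu x y z =
    (case x of (al, be) \<Rightarrow> case y of (ga, de) \<Rightarrow> case z of (si, ta) \<Rightarrow>
      (\<Sum>pp\<in>UNIV. \<Sum>ee\<in>UNIV. \<Sum>rr\<in>UNIV.
         (-1) ^ (deg be * deg ga + deg pp * deg ee + deg pp * deg al + deg ee)
         * m ga pp ee * m ta rr de * mu be ee rr * mu si al pp))"

text \<open>Heisenberg double H(A*): basis (si,ta) stands for e~_si (x) e~^ta.\<close>

definition HAs_mult ::
  "('i::finite \<Rightarrow> nat) \<Rightarrow> ('i \<Rightarrow> 'i \<Rightarrow> 'i \<Rightarrow> complex) \<Rightarrow> ('i \<Rightarrow> 'i \<Rightarrow> 'i \<Rightarrow> complex)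
   \<Rightarrow> 'i \<times> 'i \<Rightarrow> 'i \<times> 'i \<Rightarrow> 'i \<times> 'i \<Rightarrow> complex" where
  "HAs_mult deg m mu x y z =
    (case x of (al, be) \<Rightarrow> case y of (ga, de) \<Rightarrow> case z of (si, ta) \<Rightarrow>
      (\<Sum>rr\<in>UNIV. \<Sum>ee\<in>UNIV. \<Sum>pp\<in>UNIV.
         (-1) ^ (deg rr * deg pp + deg rr * deg ee + deg pp * deg de)
         * mu ga rr ee * mu ta pp de * m be ee pp * m si al rr))"

definition hdeg :: "('i \<Rightarrow> nat) \<Rightarrow> 'i \<times> 'i \<Rightarrow> nat" where
  "hdeg deg p = deg (fst p) + deg (snd p)"

definition oneHA :: "('i \<Rightarrow> complex) \<Rightarrow> ('i \<Rightarrow> complex) \<Rightarrow> 'i \<times> 'i \<Rightarrow> complex" where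
  "oneHA u eps p = eps (fst p) * u (snd p)"          (* 1 (x) 1 in A* (x) A *)
definition oneHAs :: "('i \<Rightarrow> complex) \<Rightarrow> ('i \<Rightarrow> complex) \<Rightarrow> 'i \<times> 'i \<Rightarrow> complex" where
  "oneHAs u eps p = u (fst p) * eps (snd p)"         (* 1 (x) 1 in A (x) A* *)

definition e_low :: "('i \<Rightarrow> complex) \<Rightarrow> 'i \<Rightarrow> 'i \<times> 'i \<Rightarrow> complex" where
  "e_low eps al p = eps (fst p) * (if snd p = al then 1 else 0)"   (* e_al = 1 (x) e_al in H(A) *)
definition e_up :: "('i \<Rightarrow> complex) \<Rightarrow> 'i \<Rightarrow> 'i \<times> 'i \<Rightarrow> complex" where
  "e_up u al p = (if fst p = al then 1 else 0) * u (snd p)"        (* e^al = e^al (x) 1 in H(A) *)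
definition et_low :: "('i \<Rightarrow> complex) \<Rightarrow> 'i \<Rightarrow> 'i \<times> 'i \<Rightarrow> complex" where
  "et_low eps al p = (if fst p = al then 1 else 0) * eps (snd p)"  (* e~_al = e~_al (x) 1 in H(A* ) *)
definition et_up :: "('i \<Rightarrow> complex) \<Rightarrow> 'i \<Rightarrow> 'i \<times> 'i \<Rightarrow> complex" where
  "et_up u al p = u (fst p) * (if snd p = al then 1 else 0)"       (* e~^al = 1 (x) e~^al in H(A* ) *)

definition S_el :: "('i::finite \<Rightarrow> nat) \<Rightarrow> ('i \<Rightarrow> complex) \<Rightarrow> ('i \<Rightarrow> complex)
    \<Rightarrow> ('i \<times> 'i) \<times> ('i \<times> 'i) \<Rightarrow> complex" where
  "S_el deg u eps q = (\<Sum>al\<in>UNIV. (-1) ^ deg al * e_low eps al (fst q) * e_up u al (snd q))"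
definition St_el :: "('i::finite \<Rightarrow> complex) \<Rightarrow> ('i \<Rightarrow> complex)
    \<Rightarrow> ('i \<times> 'i) \<times> ('i \<times> 'i) \<Rightarrow> complex" where
  "St_el u eps q = (\<Sum>al\<in>UNIV. et_low eps al (fst q) * et_up u al (snd q))"
definition S1_el :: "('i::finite \<Rightarrow> nat) \<Rightarrow> ('i \<Rightarrow> complex) \<Rightarrow> ('i \<Rightarrow> complex) \<Rightarrow> nat \<Rightarrow> nat
    \<Rightarrow> ('i \<times> 'i) \<times> ('i \<times> 'i) \<Rightarrow> complex" where
  "S1_el deg u eps a b' q =
     (\<Sum>al\<in>UNIV. (-1) ^ ((a + b' + 1) * deg al) * et_low eps al (fst q) * e_up u al (snd q))"
definition S2_el :: "('i::finite \<Rightarrow> nat) \<Rightarrow> ('i \<Rightarrow> complex) \<Rightarrow> ('i \<Rightarrow> complex) \<Rightarrow> nat \<Rightarrow> nat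
    \<Rightarrow> ('i \<times> 'i) \<times> ('i \<times> 'i) \<Rightarrow> complex" where
  "S2_el deg u eps a b' q =
     (\<Sum>al\<in>UNIV. (-1) ^ ((a + b') * deg al) * e_low eps al (fst q) * et_up u al (snd q))"

text \<open>Product in a graded triple tensor product B1 (x) B2 (x) B3 of algebras given by
degree functions d_i and structure constants c_i (c x y z = coefficient of z in x y):
(x1(x)x2(x)x3)(y1(x)y2(x)y3) = (-1)^(|y1|(|x2|+|x3|) + |y2||x3|) x1y1 (x) x2y2 (x) x3y3.\<close>
definition prod3 ::
  "('a::finite \<Rightarrow> nat) \<Rightarrow> ('b::finite \<Rightarrow> nat) \<Rightarrow> ('c::finite \<Rightarrow> nat)
   \<Rightarrow> ('a \<Rightarrow> 'a \<Rightarrow> 'a \<Rightarrow> complex) \<Rightarrow> ('b \<Rightarrow> 'b \<Rightarrow> 'b \<Rightarrow> complex) \<Rightarrow> ('c \<Rightarrow> 'c \<Rightarrow> 'c \<Rightarrow> complex)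
   \<Rightarrow> ('a \<times> 'b \<times> 'c \<Rightarrow> complex) \<Rightarrow> ('a \<times> 'b \<times> 'c \<Rightarrow> complex) \<Rightarrow> ('a \<times> 'b \<times> 'c \<Rightarrow> complex)" where
  "prod3 d1 d2 d3 c1 c2 c3 f g z =
    (\<Sum>x\<in>UNIV. \<Sum>y\<in>UNIV.
       (case x of (x1, x2, x3) \<Rightarrow> case y of (y1, y2, y3) \<Rightarrow> case z of (z1, z2, z3) \<Rightarrow>
         (-1) ^ (d1 y1 * (d2 x2 + d3 x3) + d2 y2 * d3 x3)
         * f x * g y * c1 x1 y1 z1 * c2 x2 y2 z2 * c3 x3 y3 z3))"

definition leg12 :: "('c \<Rightarrow> complex) \<Rightarrow> ('a \<times> 'b \<Rightarrow> complex) \<Rightarrow> 'a \<times> 'b \<times> 'c \<Rightarrow> complex" where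
  "leg12 one3 X z = (case z of (z1, z2, z3) \<Rightarrow> X (z1, z2) * one3 z3)"
definition leg13 :: "('b \<Rightarrow> complex) \<Rightarrow> ('a \<times> 'c \<Rightarrow> complex) \<Rightarrow> 'a \<times> 'b \<times> 'c \<Rightarrow> complex" where
  "leg13 one2 X z = (case z of (z1, z2, z3) \<Rightarrow> X (z1, z3) * one2 z2)"
definition leg23 :: "('a \<Rightarrow> complex) \<Rightarrow> ('b \<times> 'c \<Rightarrow> complex) \<Rightarrow> 'a \<times> 'b \<times> 'c \<Rightarrow> complex" where
  "leg23 one1 X z = (case z of (z1, z2, z3) \<Rightarrow> one1 z1 * X (z2, z3))"

end

(*
  Every canonical element is a sum, over the basis, of pure tensors of generators
  e_a = 1 (x) e_a, e^a = e^a (x) 1 of H(A) and their counterparts in the Heisenberg double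
  of the dual. By bilinearity and the Koszul sign rule of the graded triple tensor product,
  both sides of each identity become sums of pure tensors whose factors are products of two
  generators in one Heisenberg double. These products are computed once and for all from
  the structure constants; only the grading and the unit and counit axioms of A enter.
  Both sides then become the same sum over basis indices, term by term up to a sign, and
  the Koszul signs agree on every nonzero term because m, mu, u and eps respect the
  Z2-grading.
*)
theory Submission
  imports Defs
begin

lemma sum3_nonzeroE:
  assumes "(\<Sum>x\<in>A. \<Sum>y\<in>B. \<Sum>z\<in>C. f x y z) \<noteq> (0::'a::comm_monoid_add)"
  obtains x y z where "f x y z \<noteq> 0"
  using assms by (meson sum.not_neutral_contains_not_neutral)

lemma sum_UNIV_prod:
  "(\<Sum>x\<in>(UNIV::('a::finite \<times> 'b::finite) set). f x) = (\<Sum>a\<in>UNIV. \<Sum>b\<in>UNIV. f (a, b))"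
  by (simp add: sum.cartesian_product flip: UNIV_Times_UNIV)

lemma sum_pull3:
  "(\<Sum>a\<in>A. \<Sum>b\<in>B. \<Sum>c\<in>C. f a b c) = (\<Sum>c\<in>C. \<Sum>a\<in>A. \<Sum>b\<in>B. f a b c)"
  by (subst sum.swap) (rule sum.cong[OF refl], rule sum.swap)

lemma sum_interleave3:
  "(\<Sum>x1\<in>A1. \<Sum>x2\<in>A2. \<Sum>x3\<in>A3. \<Sum>y1\<in>B1. \<Sum>y2\<in>B2. \<Sum>y3\<in>B3. f x1 x2 x3 y1 y2 y3)
   = (\<Sum>x1\<in>A1. \<Sum>y1\<in>B1. \<Sum>x2\<in>A2. \<Sum>y2\<in>B2. \<Sum>x3\<in>A3. \<Sum>y3\<in>B3. f x1 x2 x3 y1 y2 y3)"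
proof -
  have "(\<Sum>x2\<in>A2. \<Sum>x3\<in>A3. \<Sum>y1\<in>B1. \<Sum>y2\<in>B2. \<Sum>y3\<in>B3. f x1 x2 x3 y1 y2 y3)
      = (\<Sum>y1\<in>B1. \<Sum>x2\<in>A2. \<Sum>y2\<in>B2. \<Sum>x3\<in>A3. \<Sum>y3\<in>B3. f x1 x2 x3 y1 y2 y3)" for x1
    by (rule trans[OF sum_pull3], (rule sum.cong[OF refl])+, rule sum.swap)
  then show ?thesis by simp
qed

lemma sum_swap_blocks:
  fixes f :: "'a::finite \<Rightarrow> 'b::finite \<Rightarrow> 'c::finite \<Rightarrow> 'd::finite
    \<Rightarrow> 'p::finite \<Rightarrow> 'q::finite \<Rightarrow> 'r::finite \<Rightarrow> complex"
  shows "(\<Sum>a\<in>UNIV. \<Sum>b\<in>UNIV. \<Sum>c\<in>UNIV. \<Sum>d\<in>UNIV. \<Sum>p\<in>UNIV. \<Sum>q\<in>UNIV. \<Sum>r\<in>UNIV. f a b c d p q r)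
       = (\<Sum>p\<in>UNIV. \<Sum>q\<in>UNIV. \<Sum>r\<in>UNIV. \<Sum>a\<in>UNIV. \<Sum>b\<in>UNIV. \<Sum>c\<in>UNIV. \<Sum>d\<in>UNIV. f a b c d p q r)"
  using sum.swap[of "\<lambda>(a, b, c, d) (p, q, r). f a b c d p q r" UNIV UNIV] by (simp add: sum_UNIV_prod)

lemma sum_product3:
  "(\<Sum>a\<in>A. \<Sum>b\<in>B. \<Sum>c\<in>C. f a * g b * h c) = sum f A * sum g B * (sum h C :: complex)"
  by (simp only: mult.assoc sum_distrib_right, simp only: sum_distrib_left)

lemma mult_if_zero [simp]:
  "(if P then x else 0) * y = (if P then x * y else 0)"
  "y * (if P then x else 0) = (if P then y * x else 0)"
  for x y :: "'a::mult_zero"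
  by simp_all

lemma sum_if_zero [simp]: "(\<Sum>x\<in>A. if P then f x else 0) = (if P then sum f A else 0)"
  by simp

section \<open>Algebras given by structure constants\<close>

definition alg_mult ::
  "('a::finite \<Rightarrow> 'a \<Rightarrow> 'a \<Rightarrow> complex) \<Rightarrow> ('a \<Rightarrow> complex) \<Rightarrow> ('a \<Rightarrow> complex) \<Rightarrow> 'a \<Rightarrow> complex" where
  "alg_mult c f g z = (\<Sum>x\<in>UNIV. \<Sum>y\<in>UNIV. f x * g y * c x y z)"

lemma alg_mult_sum_left:
  "alg_mult c (\<lambda>z. \<Sum>i\<in>I. f i z) g = (\<lambda>z. \<Sum>i\<in>I. alg_mult c (f i) g z)"
  unfolding alg_mult_def by (simp add: sum_distrib_right) (intro ext sum_pull3)

lemma alg_mult_sum_right: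
  "alg_mult c f (\<lambda>z. \<Sum>i\<in>I. g i z) = (\<lambda>z. \<Sum>i\<in>I. alg_mult c f (g i) z)"
  unfolding alg_mult_def by (simp add: sum_distrib_left sum_distrib_right) (intro ext sum_pull3)

lemma alg_mult_scale_left: "alg_mult c (\<lambda>z. k * f z) g = (\<lambda>z. k * alg_mult c f g z)"
  unfolding alg_mult_def by (simp add: sum_distrib_left mult_ac)

lemma alg_mult_scale_right: "alg_mult c f (\<lambda>z. k * g z) = (\<lambda>z. k * alg_mult c f g z)"
  unfolding alg_mult_def by (simp add: sum_distrib_left mult_ac)

lemmas alg_mult_bilinear =
  alg_mult_sum_left alg_mult_sum_right alg_mult_scale_left alg_mult_scale_right

definition delta :: "'a \<Rightarrow> 'a \<Rightarrow> complex" where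
  "delta a x = (if x = a then 1 else 0)"

lemma sum_delta_mult [simp]: "(\<Sum>x\<in>UNIV. delta a x * f x) = f (a::'a::finite)"
proof -
  have "(\<Sum>x\<in>UNIV. delta a x * f x) = (\<Sum>x\<in>UNIV. if x = a then f a else 0)"
    by (intro sum.cong) (auto simp: delta_def)
  then show ?thesis by simp
qed

lemma sum_mult_delta [simp]: "(\<Sum>x\<in>UNIV. f x * delta x a) = f (a::'a::finite)"
proof -
  have "(\<Sum>x\<in>UNIV. f x * delta x a) = (\<Sum>x\<in>UNIV. if a = x then f a else 0)"
    by (intro sum.cong) (auto simp: delta_def)
  then show ?thesis by simp
qed

lemma delta_pair: "delta (a, b) = (\<lambda>p. delta a (fst p) * delta b (snd p))"
  by (auto simp: fun_eq_iff delta_def)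

lemma alg_mult_delta_right: "alg_mult c f (delta y) z = (\<Sum>x\<in>UNIV. f x * c x y z)"
  by (simp add: alg_mult_def mult.assoc flip: sum_distrib_left)

lemma alg_mult_delta_left: "alg_mult c (delta x) g z = (\<Sum>y\<in>UNIV. g y * c x y z)"
  by (simp add: alg_mult_def mult.assoc flip: sum_distrib_left)

lemma alg_mult_unit_leftI:
  assumes "\<And>y. alg_mult c e (delta y) = delta y"
  shows "alg_mult c e f = f"
proof
  fix z
  have "alg_mult c e f z = (\<Sum>y\<in>UNIV. f y * alg_mult c e (delta y) z)"
    unfolding alg_mult_delta_right unfolding alg_mult_def
    by (subst sum.swap) (simp add: sum_distrib_left mult_ac)
  then show "alg_mult c e f z = f z"
    using assms by simp
qed

lemma alg_mult_unit_rightI: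
  assumes "\<And>x. alg_mult c (delta x) e = delta x"
  shows "alg_mult c f e = f"
proof
  fix z
  have "alg_mult c f e z = (\<Sum>x\<in>UNIV. f x * alg_mult c (delta x) e z)"
    unfolding alg_mult_delta_left unfolding alg_mult_def by (simp add: sum_distrib_left mult_ac)
  then show "alg_mult c f e z = f z"
    using assms by simp
qed

definition homogeneous :: "('a \<Rightarrow> nat) \<Rightarrow> nat \<Rightarrow> ('a \<Rightarrow> complex) \<Rightarrow> bool" where
  "homogeneous d k f \<longleftrightarrow> (\<forall>x. f x \<noteq> 0 \<longrightarrow> even (d x + k))"

lemma homogeneousD: "homogeneous d k f \<Longrightarrow> f x \<noteq> 0 \<Longrightarrow> even (d x) \<longleftrightarrow> even k"
  unfolding homogeneous_def by auto

definition parity_graded :: "('a \<Rightarrow> nat) \<Rightarrow> ('a \<Rightarrow> 'a \<Rightarrow> 'a \<Rightarrow> complex) \<Rightarrow> bool" where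
  "parity_graded d c \<longleftrightarrow> (\<forall>x y z. c x y z \<noteq> 0 \<longrightarrow> even (d x + d y + d z))"

lemma homogeneous_alg_mult:
  assumes "parity_graded d c" "homogeneous d k f" "homogeneous d l g"
  shows "homogeneous d (k + l) (alg_mult c f g)"
  unfolding homogeneous_def
proof (intro allI impI)
  fix z assume "alg_mult c f g z \<noteq> 0"
  then obtain x y where "f x * g y * c x y z \<noteq> 0"
    unfolding alg_mult_def by (meson sum.not_neutral_contains_not_neutral)
  with assms show "even (d z + (k + l))"
    unfolding parity_graded_def homogeneous_def by fastforce
qed

section \<open>The graded triple tensor product and leg numbering\<close>

definition tensor3_constants ::
  "('a \<Rightarrow> nat) \<Rightarrow> ('b \<Rightarrow> nat) \<Rightarrow> ('c \<Rightarrow> nat)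
   \<Rightarrow> ('a \<Rightarrow> 'a \<Rightarrow> 'a \<Rightarrow> complex) \<Rightarrow> ('b \<Rightarrow> 'b \<Rightarrow> 'b \<Rightarrow> complex) \<Rightarrow> ('c \<Rightarrow> 'c \<Rightarrow> 'c \<Rightarrow> complex)
   \<Rightarrow> 'a \<times> 'b \<times> 'c \<Rightarrow> 'a \<times> 'b \<times> 'c \<Rightarrow> 'a \<times> 'b \<times> 'c \<Rightarrow> complex" where
  "tensor3_constants d1 d2 d3 c1 c2 c3 x y z =
    (case x of (x1, x2, x3) \<Rightarrow> case y of (y1, y2, y3) \<Rightarrow> case z of (z1, z2, z3) \<Rightarrow>
       (-1) ^ (d1 y1 * (d2 x2 + d3 x3) + d2 y2 * d3 x3) * c1 x1 y1 z1 * c2 x2 y2 z2 * c3 x3 y3 z3)"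

lemma prod3_eq_alg_mult: "prod3 d1 d2 d3 c1 c2 c3 = alg_mult (tensor3_constants d1 d2 d3 c1 c2 c3)"
  unfolding prod3_def alg_mult_def tensor3_constants_def
  by (intro ext sum.cong refl) (auto split: prod.split simp: mult_ac)

lemmas prod3_bilinear =
  alg_mult_bilinear[where c = "tensor3_constants d1 d2 d3 c1 c2 c3" for d1 d2 d3 c1 c2 c3,
    folded prod3_eq_alg_mult]

(* A pure tensor f1 (x) f2 (x) f3 of homogeneous factors of parities k1, k2, k3. The tags do
   not affect the value; they let the simplifier read off the Koszul sign in prod3_htensor3. *)
definition htensor3 ::
  "nat \<Rightarrow> ('a \<Rightarrow> complex) \<Rightarrow> nat \<Rightarrow> ('b \<Rightarrow> complex) \<Rightarrow> nat \<Rightarrow> ('c \<Rightarrow> complex) \<Rightarrow> 'a \<times> 'b \<times> 'c \<Rightarrow> complex" where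
  "htensor3 k1 f1 k2 f2 k3 f3 z = (case z of (z1, z2, z3) \<Rightarrow> f1 z1 * f2 z2 * f3 z3)"

lemma prod3_htensor3:
  fixes d1 :: "'a::finite \<Rightarrow> nat" and d2 :: "'b::finite \<Rightarrow> nat" and d3 :: "'c::finite \<Rightarrow> nat"
  assumes "homogeneous d2 k2 f2" "homogeneous d3 k3 f3" "homogeneous d1 l1 g1" "homogeneous d2 l2 g2"
  shows "prod3 d1 d2 d3 c1 c2 c3 (htensor3 k1 f1 k2 f2 k3 f3) (htensor3 l1 g1 l2 g2 l3 g3)
     = (\<lambda>z. (-1) ^ (l1 * (k2 + k3) + l2 * k3) *
          htensor3 (k1 + l1) (alg_mult c1 f1 g1) (k2 + l2) (alg_mult c2 f2 g2)
            (k3 + l3) (alg_mult c3 f3 g3) z)"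
proof
  fix z :: "'a \<times> 'b \<times> 'c"
  obtain z1 z2 z3 where z: "z = (z1, z2, z3)" by (cases z)
  define sgn :: complex where "sgn = (-1) ^ (l1 * (k2 + k3) + l2 * k3)"
  define F1 where "F1 x1 y1 = f1 x1 * g1 y1 * c1 x1 y1 z1" for x1 y1
  define F2 where "F2 x2 y2 = f2 x2 * g2 y2 * c2 x2 y2 z2" for x2 y2
  define F3 where "F3 x3 y3 = f3 x3 * g3 y3 * c3 x3 y3 z3" for x3 y3
  have koszul: "F1 x1 y1 * F2 x2 y2 * F3 x3 y3 * (-1) ^ (d1 y1 * (d2 x2 + d3 x3) + d2 y2 * d3 x3)
      = F1 x1 y1 * F2 x2 y2 * F3 x3 y3 * sgn" for x1 y1 x2 y2 x3 y3
    using assms[THEN homogeneousD]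
    by (cases "f2 x2 = 0 \<or> f3 x3 = 0 \<or> g1 y1 = 0 \<or> g2 y2 = 0")
       (auto simp: F1_def F2_def F3_def sgn_def minus_one_power_iff)
  have "prod3 d1 d2 d3 c1 c2 c3 (htensor3 k1 f1 k2 f2 k3 f3) (htensor3 l1 g1 l2 g2 l3 g3) z
     = (\<Sum>x1\<in>UNIV. \<Sum>x2\<in>UNIV. \<Sum>x3\<in>UNIV. \<Sum>y1\<in>UNIV. \<Sum>y2\<in>UNIV. \<Sum>y3\<in>UNIV.
          sgn * (F1 x1 y1 * F2 x2 y2 * F3 x3 y3))"
    unfolding prod3_def htensor3_def z sum_UNIV_prod
    apply (intro sum.cong refl)
    subgoal for x1 x2 x3 y1 y2 y3
      using koszul[of x1 y1 x2 y2 x3 y3] by (simp add: F1_def F2_def F3_def mult_ac)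
    done
  also have "\<dots> = sgn * ((\<Sum>x1\<in>UNIV. \<Sum>y1\<in>UNIV. F1 x1 y1) * (\<Sum>x2\<in>UNIV. \<Sum>y2\<in>UNIV. F2 x2 y2)
                          * (\<Sum>x3\<in>UNIV. \<Sum>y3\<in>UNIV. F3 x3 y3))"
    by (rule trans[OF sum_interleave3])
      (simp only: mult.assoc sum_distrib_right, simp only: sum_distrib_left)
  finally show "prod3 d1 d2 d3 c1 c2 c3 (htensor3 k1 f1 k2 f2 k3 f3) (htensor3 l1 g1 l2 g2 l3 g3) z
     = sgn * htensor3 (k1 + l1) (alg_mult c1 f1 g1) (k2 + l2) (alg_mult c2 f2 g2)
               (k3 + l3) (alg_mult c3 f3 g3) z"
    by (simp add: htensor3_def alg_mult_def z F1_def F2_def F3_def)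
qed

definition tensor_sum ::
  "('i::finite \<Rightarrow> complex) \<Rightarrow> ('i \<Rightarrow> 'a \<Rightarrow> complex) \<Rightarrow> ('i \<Rightarrow> 'b \<Rightarrow> complex) \<Rightarrow> 'a \<times> 'b \<Rightarrow> complex" where
  "tensor_sum k f g q = (\<Sum>i\<in>UNIV. k i * f i (fst q) * g i (snd q))"

lemma leg12_tensor_sum:
  "leg12 e (tensor_sum k f g) = (\<lambda>z. \<Sum>i\<in>UNIV. k i * htensor3 (d i) (f i) (d i) (g i) 0 e z)"
  by (auto simp: fun_eq_iff leg12_def tensor_sum_def htensor3_def sum_distrib_left sum_distrib_right mult_ac
      split: prod.split)

lemma leg13_tensor_sum:
  "leg13 e (tensor_sum k f g) = (\<lambda>z. \<Sum>i\<in>UNIV. k i * htensor3 (d i) (f i) 0 e (d i) (g i) z)"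
  by (auto simp: fun_eq_iff leg13_def tensor_sum_def htensor3_def sum_distrib_left sum_distrib_right mult_ac
      split: prod.split)

lemma leg23_tensor_sum:
  "leg23 e (tensor_sum k f g) = (\<lambda>z. \<Sum>i\<in>UNIV. k i * htensor3 0 e (d i) (f i) (d i) (g i) z)"
  by (auto simp: fun_eq_iff leg23_def tensor_sum_def htensor3_def sum_distrib_left mult_ac
      split: prod.split)

lemma canonical_elements_tensor_sum:
  "S_el deg u eps = tensor_sum (\<lambda>i. (-1) ^ deg i) (e_low eps) (e_up u)"
  "St_el u eps = tensor_sum (\<lambda>i. 1) (et_low eps) (et_up u)"
  "S1_el deg u eps a b' = tensor_sum (\<lambda>i. (-1) ^ ((a + b' + 1) * deg i)) (et_low eps) (e_up u)"
  "S2_el deg u eps a b' = tensor_sum (\<lambda>i. (-1) ^ ((a + b') * deg i)) (e_low eps) (et_up u)"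
  by (simp_all add: fun_eq_iff tensor_sum_def S_el_def St_el_def S1_el_def S2_el_def)

lemma generators_separable:
  "e_up u i = (\<lambda>p. delta i (fst p) * u (snd p))"
  "e_low eps i = (\<lambda>p. eps (fst p) * delta i (snd p))"
  "et_low eps i = (\<lambda>p. delta i (fst p) * eps (snd p))"
  "et_up u i = (\<lambda>p. u (fst p) * delta i (snd p))"
  "oneHA u eps = (\<lambda>p. eps (fst p) * u (snd p))"
  "oneHAs u eps = (\<lambda>p. u (fst p) * eps (snd p))"
  by (simp_all add: fun_eq_iff delta_def e_up_def e_low_def et_low_def et_up_def oneHA_def oneHAs_def)

section \<open>Multiplication tables of the Heisenberg doubles\<close>

locale graded_biunital =
  fixes deg :: "'i::finite \<Rightarrow> nat"
    and m mu :: "'i \<Rightarrow> 'i \<Rightarrow> 'i \<Rightarrow> complex"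
    and u eps :: "'i \<Rightarrow> complex"
  assumes m_parity: "m c a b \<noteq> 0 \<Longrightarrow> deg c mod 2 = (deg a + deg b) mod 2"
    and mu_parity: "mu a b c \<noteq> 0 \<Longrightarrow> deg a mod 2 = (deg b + deg c) mod 2"
    and u_degree: "u x \<noteq> 0 \<Longrightarrow> deg x = 0"
    and eps_degree: "eps x \<noteq> 0 \<Longrightarrow> deg x = 0"
    and unit_left: "(\<Sum>k\<in>UNIV. u k * m c k a) = (if a = c then 1 else 0)"
    and unit_right: "(\<Sum>k\<in>UNIV. u k * m c a k) = (if a = c then 1 else 0)"
    and counit_left: "(\<Sum>k\<in>UNIV. eps k * mu a k b) = (if a = b then 1 else 0)"
    and counit_right: "(\<Sum>k\<in>UNIV. eps k * mu a b k) = (if a = b then 1 else 0)"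
    and comult_unit: "(\<Sum>k\<in>UNIV. u k * mu k x y) = u x * u y"
    and counit_mult: "(\<Sum>k\<in>UNIV. m k a b * eps k) = eps a * eps b"
    and counit_unit: "(\<Sum>k\<in>UNIV. u k * eps k) = 1"

lemma graded_hopf_biunital:
  assumes "graded_hopf deg m mu u eps s"
  shows "graded_biunital deg m mu u eps"
  using assms unfolding graded_hopf_def by unfold_locales meson+

context graded_biunital
begin

abbreviation "HA \<equiv> HA_mult deg m mu"

abbreviation "HAs \<equiv> HAs_mult deg m mu"

lemma counit_mult': "(\<Sum>k\<in>UNIV. eps k * m k a b) = eps a * eps b"
  using counit_mult by (simp add: mult.commute)

lemmas unit_counit_laws =
  unit_left unit_right counit_left counit_right comult_unit counit_mult' counit_unit

lemma m_even_iff: "m c a b \<noteq> 0 \<Longrightarrow> even (deg c) \<longleftrightarrow> (even (deg a) \<longleftrightarrow> even (deg b))"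
  using m_parity[of c a b] by (metis even_add even_mod_2_iff)

lemma mu_even_iff: "mu a b c \<noteq> 0 \<Longrightarrow> even (deg a) \<longleftrightarrow> (even (deg b) \<longleftrightarrow> even (deg c))"
  using mu_parity[of a b c] by (metis even_add even_mod_2_iff)

lemma parity_graded_HA: "parity_graded (hdeg deg) HA"
  unfolding parity_graded_def
proof clarify
  fix al be ga de si ta
  assume "HA (al, be) (ga, de) (si, ta) \<noteq> 0"
  then obtain pp ee rr where "m ga pp ee * m ta rr de * mu be ee rr * mu si al pp \<noteq> 0"
    unfolding HA_mult_def prod.case by (elim sum3_nonzeroE) auto
  then show "even (hdeg deg (al, be) + hdeg deg (ga, de) + hdeg deg (si, ta))"
    using m_even_iff[of ga pp ee] m_even_iff[of ta rr de] mu_even_iff[of be ee rr]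
      mu_even_iff[of si al pp]
    by (simp add: hdeg_def) blast
qed

lemma parity_graded_HAs: "parity_graded (hdeg deg) HAs"
  unfolding parity_graded_def
proof clarify
  fix al be ga de si ta
  assume "HAs (al, be) (ga, de) (si, ta) \<noteq> 0"
  then obtain pp ee rr where "mu ga rr ee * mu ta pp de * m be ee pp * m si al rr \<noteq> 0"
    unfolding HAs_mult_def prod.case by (elim sum3_nonzeroE) auto
  then show "even (hdeg deg (al, be) + hdeg deg (ga, de) + hdeg deg (si, ta))"
    using mu_even_iff[of ga rr ee] mu_even_iff[of ta pp de] m_even_iff[of be ee pp]
      m_even_iff[of si al rr]
    by (simp add: hdeg_def) blast
qed

lemma homogeneous_generators:
  "homogeneous (hdeg deg) (deg i) (e_up u i)"
  "homogeneous (hdeg deg) (deg i) (e_low eps i)"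
  "homogeneous (hdeg deg) (deg i) (et_low eps i)"
  "homogeneous (hdeg deg) (deg i) (et_up u i)"
  "homogeneous (hdeg deg) 0 (oneHA u eps)"
  "homogeneous (hdeg deg) 0 (oneHAs u eps)"
  by (auto simp: homogeneous_def hdeg_def e_up_def e_low_def et_low_def et_up_def oneHA_def oneHAs_def
      dest: u_degree eps_degree)

lemma homogeneous_delta: "homogeneous deg (deg i) (delta i)"
  by (simp add: homogeneous_def delta_def)

lemma homogeneous_u: "homogeneous deg 0 u"
  by (simp add: homogeneous_def u_degree)

lemma homogeneous_eps: "homogeneous deg 0 eps"
  by (simp add: homogeneous_def eps_degree)

lemma HA_mult_separable:
  assumes "homogeneous deg a f1" "homogeneous deg b f2" "homogeneous deg c g1"
  shows "alg_mult HA (\<lambda>p. f1 (fst p) * f2 (snd p)) (\<lambda>p. g1 (fst p) * g2 (snd p)) (\<sigma>, \<tau>)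
   = (\<Sum>pp\<in>UNIV. \<Sum>ee\<in>UNIV. \<Sum>rr\<in>UNIV. (-1) ^ (b * c + deg pp * deg ee + deg pp * a + deg ee) *
        (\<Sum>al\<in>UNIV. f1 al * mu \<sigma> al pp) * (\<Sum>be\<in>UNIV. f2 be * mu be ee rr) *
        (\<Sum>ga\<in>UNIV. g1 ga * m ga pp ee) * (\<Sum>de\<in>UNIV. g2 de * m \<tau> rr de))"
proof -
  define sgn :: "'i \<Rightarrow> 'i \<Rightarrow> complex" where
    "sgn pp ee = (-1) ^ (b * c + deg pp * deg ee + deg pp * a + deg ee)" for pp ee
  define T where "T al be ga de pp ee rr =
    (f1 al * mu \<sigma> al pp) * (f2 be * mu be ee rr) * (g1 ga * m ga pp ee) * (g2 de * m \<tau> rr de)"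
    for al be ga de pp ee rr
  have koszul: "T al be ga de pp ee rr * (-1) ^ (deg be * deg ga + deg pp * deg ee + deg pp * deg al + deg ee)
      = T al be ga de pp ee rr * sgn pp ee" for al be ga de pp ee rr
    using assms[THEN homogeneousD]
    by (cases "f1 al = 0 \<or> f2 be = 0 \<or> g1 ga = 0") (auto simp: T_def sgn_def minus_one_power_iff)
  have "alg_mult HA (\<lambda>p. f1 (fst p) * f2 (snd p)) (\<lambda>p. g1 (fst p) * g2 (snd p)) (\<sigma>, \<tau>)
      = (\<Sum>al\<in>UNIV. \<Sum>be\<in>UNIV. \<Sum>ga\<in>UNIV. \<Sum>de\<in>UNIV. \<Sum>pp\<in>UNIV. \<Sum>ee\<in>UNIV. \<Sum>rr\<in>UNIV.
           sgn pp ee * T al be ga de pp ee rr)"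
    unfolding alg_mult_def HA_mult_def sum_UNIV_prod
    apply (simp add: sum_distrib_left)
    apply (intro sum.cong refl)
    subgoal for al be ga de pp ee rr
      using koszul[of al be ga de pp ee rr] by (simp add: T_def mult_ac)
    done
  also have "\<dots> = (\<Sum>pp\<in>UNIV. \<Sum>ee\<in>UNIV. \<Sum>rr\<in>UNIV. \<Sum>al\<in>UNIV. \<Sum>be\<in>UNIV. \<Sum>ga\<in>UNIV. \<Sum>de\<in>UNIV.
           sgn pp ee * T al be ga de pp ee rr)"
    by (rule sum_swap_blocks)
  also have "\<dots> = (\<Sum>pp\<in>UNIV. \<Sum>ee\<in>UNIV. \<Sum>rr\<in>UNIV. sgn pp ee *
        (\<Sum>al\<in>UNIV. f1 al * mu \<sigma> al pp) * (\<Sum>be\<in>UNIV. f2 be * mu be ee rr) *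
        (\<Sum>ga\<in>UNIV. g1 ga * m ga pp ee) * (\<Sum>de\<in>UNIV. g2 de * m \<tau> rr de))"
    unfolding T_def by (simp only: mult.assoc sum_distrib_right, simp only: sum_distrib_left)
  finally show ?thesis
    by (simp only: sgn_def)
qed

lemma HAs_mult_separable:
  assumes "homogeneous deg d g2"
  shows "alg_mult HAs (\<lambda>p. f1 (fst p) * f2 (snd p)) (\<lambda>p. g1 (fst p) * g2 (snd p)) (\<sigma>, \<tau>)
   = (\<Sum>rr\<in>UNIV. \<Sum>ee\<in>UNIV. \<Sum>pp\<in>UNIV. (-1) ^ (deg rr * deg pp + deg rr * deg ee + deg pp * d) *
        (\<Sum>al\<in>UNIV. f1 al * m \<sigma> al rr) * (\<Sum>be\<in>UNIV. f2 be * m be ee pp) *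
        (\<Sum>ga\<in>UNIV. g1 ga * mu ga rr ee) * (\<Sum>de\<in>UNIV. g2 de * mu \<tau> pp de))"
proof -
  define sgn :: "'i \<Rightarrow> 'i \<Rightarrow> 'i \<Rightarrow> complex" where
    "sgn rr ee pp = (-1) ^ (deg rr * deg pp + deg rr * deg ee + deg pp * d)" for rr ee pp
  define T where "T al be ga de rr ee pp =
    (f1 al * m \<sigma> al rr) * (f2 be * m be ee pp) * (g1 ga * mu ga rr ee) * (g2 de * mu \<tau> pp de)"
    for al be ga de rr ee pp
  have koszul: "T al be ga de rr ee pp * (-1) ^ (deg rr * deg pp + deg rr * deg ee + deg pp * deg de)
      = T al be ga de rr ee pp * sgn rr ee pp" for al be ga de rr ee pp
    using assms[THEN homogeneousD]
    by (cases "g2 de = 0") (auto simp: T_def sgn_def minus_one_power_iff)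
  have "alg_mult HAs (\<lambda>p. f1 (fst p) * f2 (snd p)) (\<lambda>p. g1 (fst p) * g2 (snd p)) (\<sigma>, \<tau>)
      = (\<Sum>al\<in>UNIV. \<Sum>be\<in>UNIV. \<Sum>ga\<in>UNIV. \<Sum>de\<in>UNIV. \<Sum>rr\<in>UNIV. \<Sum>ee\<in>UNIV. \<Sum>pp\<in>UNIV.
           sgn rr ee pp * T al be ga de rr ee pp)"
    unfolding alg_mult_def HAs_mult_def sum_UNIV_prod
    apply (simp add: sum_distrib_left)
    apply (intro sum.cong refl)
    subgoal for al be ga de rr ee pp
      using koszul[of al be ga de rr ee pp] by (simp add: T_def mult_ac)
    done
  also have "\<dots> = (\<Sum>rr\<in>UNIV. \<Sum>ee\<in>UNIV. \<Sum>pp\<in>UNIV. \<Sum>al\<in>UNIV. \<Sum>be\<in>UNIV. \<Sum>ga\<in>UNIV. \<Sum>de\<in>UNIV.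
           sgn rr ee pp * T al be ga de rr ee pp)"
    by (rule sum_swap_blocks)
  also have "\<dots> = (\<Sum>rr\<in>UNIV. \<Sum>ee\<in>UNIV. \<Sum>pp\<in>UNIV. sgn rr ee pp *
        (\<Sum>al\<in>UNIV. f1 al * m \<sigma> al rr) * (\<Sum>be\<in>UNIV. f2 be * m be ee pp) *
        (\<Sum>ga\<in>UNIV. g1 ga * mu ga rr ee) * (\<Sum>de\<in>UNIV. g2 de * mu \<tau> pp de))"
    unfolding T_def by (simp only: mult.assoc sum_distrib_right, simp only: sum_distrib_left)
  finally show ?thesis
    by (simp only: sgn_def)
qed

lemma HA_unit_left: "alg_mult HA (oneHA u eps) f = f"
proof (rule alg_mult_unit_leftI, rule ext)
  fix y z :: "'i \<times> 'i"
  obtain y1 y2 where y: "y = (y1, y2)" by (cases y)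
  obtain z1 z2 where z: "z = (z1, z2)" by (cases z)
  have "alg_mult HA (oneHA u eps) (delta y) z
      = (\<Sum>ee\<in>UNIV. \<Sum>rr\<in>UNIV. (-1) ^ (deg z1 * deg ee + deg ee) * (u ee * u rr) * m y1 z1 ee * m z2 rr y2)"
    unfolding y z generators_separable delta_pair
    by (simp add: HA_mult_separable[OF homogeneous_eps homogeneous_u homogeneous_delta] unit_counit_laws)
  also have "\<dots> = (\<Sum>ee\<in>UNIV. \<Sum>rr\<in>UNIV. (u ee * m y1 z1 ee) * (u rr * m z2 rr y2))"
    by (intro sum.cong refl) (auto simp: u_degree)
  also have "\<dots> = delta y z"
    by (simp add: unit_left unit_right delta_def y z flip: sum_product)
  finally show "alg_mult HA (oneHA u eps) (delta y) z = delta y z" .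
qed

lemma HA_unit_right: "alg_mult HA f (oneHA u eps) = f"
proof (rule alg_mult_unit_rightI, rule ext)
  fix x z :: "'i \<times> 'i"
  obtain x1 x2 where x: "x = (x1, x2)" by (cases x)
  obtain z1 z2 where z: "z = (z1, z2)" by (cases z)
  have "alg_mult HA (delta x) (oneHA u eps) z
      = (\<Sum>pp\<in>UNIV. \<Sum>ee\<in>UNIV. (-1) ^ (deg pp * deg ee + deg pp * deg x1 + deg ee) *
           mu z1 x1 pp * mu x2 ee z2 * (eps pp * eps ee))"
    unfolding x z generators_separable delta_pair
    by (simp add: HA_mult_separable[OF homogeneous_delta homogeneous_delta homogeneous_eps] unit_counit_laws)
  also have "\<dots> = (\<Sum>pp\<in>UNIV. \<Sum>ee\<in>UNIV. (eps pp * mu z1 x1 pp) * (eps ee * mu x2 ee z2))"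
    apply (intro sum.cong refl)
    subgoal for pp ee by (cases "eps pp = 0"; cases "eps ee = 0") (auto simp: eps_degree)
    done
  also have "\<dots> = delta x z"
    by (simp add: counit_left counit_right delta_def x z flip: sum_product)
  finally show "alg_mult HA (delta x) (oneHA u eps) z = delta x z" .
qed

lemma HAs_unit_left: "alg_mult HAs (oneHAs u eps) f = f"
proof (rule alg_mult_unit_leftI, rule ext)
  fix y z :: "'i \<times> 'i"
  obtain y1 y2 where y: "y = (y1, y2)" by (cases y)
  obtain z1 z2 where z: "z = (z1, z2)" by (cases z)
  have "alg_mult HAs (oneHAs u eps) (delta y) z
      = (\<Sum>ee\<in>UNIV. \<Sum>pp\<in>UNIV. (-1) ^ (deg z1 * deg pp + deg z1 * deg ee + deg pp * deg y2) *
           (eps ee * eps pp) * mu y1 z1 ee * mu z2 pp y2)"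
    unfolding y z generators_separable delta_pair
    by (simp add: HAs_mult_separable[OF homogeneous_delta] unit_counit_laws)
  also have "\<dots> = (\<Sum>ee\<in>UNIV. \<Sum>pp\<in>UNIV. (eps ee * mu y1 z1 ee) * (eps pp * mu z2 pp y2))"
    by (intro sum.cong refl) (auto simp: eps_degree)
  also have "\<dots> = delta y z"
    by (simp add: counit_left counit_right delta_def y z flip: sum_product)
  finally show "alg_mult HAs (oneHAs u eps) (delta y) z = delta y z" .
qed

lemma HAs_unit_right: "alg_mult HAs f (oneHAs u eps) = f"
proof (rule alg_mult_unit_rightI, rule ext)
  fix x z :: "'i \<times> 'i"
  obtain x1 x2 where x: "x = (x1, x2)" by (cases x)
  obtain z1 z2 where z: "z = (z1, z2)" by (cases z)
  have "alg_mult HAs (delta x) (oneHAs u eps) z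
      = (\<Sum>rr\<in>UNIV. \<Sum>ee\<in>UNIV. (-1) ^ (deg rr * deg z2 + deg rr * deg ee) *
           m z1 x1 rr * m x2 ee z2 * (u rr * u ee))"
    unfolding x z generators_separable delta_pair
    by (simp add: HAs_mult_separable[OF homogeneous_eps] unit_counit_laws)
  also have "\<dots> = (\<Sum>rr\<in>UNIV. \<Sum>ee\<in>UNIV. (u rr * m z1 x1 rr) * (u ee * m x2 ee z2))"
    by (intro sum.cong refl) (auto simp: u_degree)
  also have "\<dots> = delta x z"
    by (simp add: unit_left unit_right delta_def x z flip: sum_product)
  finally show "alg_mult HAs (delta x) (oneHAs u eps) z = delta x z" .
qed

lemma e_up_mult_e_low: "alg_mult HA (e_up u i) (e_low eps j) (z1, z2) = delta (i, j) (z1, z2)"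
proof -
  have "alg_mult HA (e_up u i) (e_low eps j) (z1, z2)
      = (\<Sum>pp\<in>UNIV. \<Sum>ee\<in>UNIV. \<Sum>rr\<in>UNIV. (-1) ^ (deg pp * deg ee + deg pp * deg i + deg ee) *
           mu z1 i pp * (u ee * u rr) * (eps pp * eps ee) * m z2 rr j)"
    unfolding generators_separable
    by (simp add: HA_mult_separable[OF homogeneous_delta homogeneous_u homogeneous_eps] unit_counit_laws)
  also have "\<dots> = (\<Sum>pp\<in>UNIV. \<Sum>ee\<in>UNIV. \<Sum>rr\<in>UNIV. (eps pp * mu z1 i pp) * (u ee * eps ee) * (u rr * m z2 rr j))"
    apply (intro sum.cong refl)
    subgoal for pp ee rr by (cases "eps pp = 0"; cases "u ee = 0") (auto simp: eps_degree u_degree)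
    done
  also have "\<dots> = delta (i, j) (z1, z2)"
    by (simp add: sum_product3 counit_right unit_left counit_unit delta_def)
  finally show ?thesis .
qed

lemma e_up_mult_e_up: "alg_mult HA (e_up u i) (e_up u j) (z1, z2) = (-1) ^ (deg i * deg j) * mu z1 i j * u z2"
proof -
  have "alg_mult HA (e_up u i) (e_up u j) (z1, z2)
      = (\<Sum>pp\<in>UNIV. \<Sum>ee\<in>UNIV. (-1) ^ (deg pp * deg ee + deg pp * deg i + deg ee) *
           mu z1 i pp * (u ee * u z2) * m j pp ee)"
    unfolding generators_separable
    by (simp add: HA_mult_separable[OF homogeneous_delta homogeneous_u homogeneous_delta] unit_counit_laws)
  also have "\<dots> = (\<Sum>pp\<in>UNIV. (-1) ^ (deg pp * deg i) * mu z1 i pp * u z2 * (\<Sum>ee\<in>UNIV. u ee * m j pp ee))"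
    unfolding sum_distrib_left
    apply (intro sum.cong refl)
    subgoal for pp ee by (cases "u ee = 0") (auto simp: u_degree)
    done
  also have "\<dots> = (-1) ^ (deg i * deg j) * mu z1 i j * u z2"
    by (simp add: unit_right mult.commute)
  finally show ?thesis .
qed

lemma e_low_mult_e_low: "alg_mult HA (e_low eps i) (e_low eps j) (z1, z2) = eps z1 * m z2 i j"
proof -
  have "alg_mult HA (e_low eps i) (e_low eps j) (z1, z2)
      = (\<Sum>ee\<in>UNIV. \<Sum>rr\<in>UNIV. (-1) ^ (deg z1 * deg ee + deg ee) * mu i ee rr * (eps z1 * eps ee) * m z2 rr j)"
    unfolding generators_separable
    by (simp add: HA_mult_separable[OF homogeneous_eps homogeneous_delta homogeneous_eps] unit_counit_laws)
  also have "\<dots> = (\<Sum>rr\<in>UNIV. (\<Sum>ee\<in>UNIV. eps ee * mu i ee rr) * (eps z1 * m z2 rr j))"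
    apply (subst sum.swap)
    unfolding sum_distrib_right
    apply (intro sum.cong refl)
    subgoal for rr ee by (cases "eps ee = 0"; cases "eps z1 = 0") (auto simp: eps_degree)
    done
  also have "\<dots> = eps z1 * m z2 i j"
    by (simp add: counit_left)
  finally show ?thesis .
qed

lemma e_low_mult_e_up:
  "alg_mult HA (e_low eps i) (e_up u j) (z1, z2)
   = (\<Sum>ee\<in>UNIV. (-1) ^ (deg i * deg j + deg z1 * deg ee + deg ee) * mu i ee z2 * m j z1 ee)"
  unfolding generators_separable
  by (simp add: HA_mult_separable[OF homogeneous_eps homogeneous_delta homogeneous_delta] unit_counit_laws)

lemma et_low_mult_et_up: "alg_mult HAs (et_low eps i) (et_up u j) (z1, z2) = delta (i, j) (z1, z2)"
proof -
  have "alg_mult HAs (et_low eps i) (et_up u j) (z1, z2)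
      = (\<Sum>rr\<in>UNIV. \<Sum>ee\<in>UNIV. \<Sum>pp\<in>UNIV. (-1) ^ (deg rr * deg pp + deg rr * deg ee + deg pp * deg j) *
           m z1 i rr * (eps ee * eps pp) * (u rr * u ee) * mu z2 pp j)"
    unfolding generators_separable
    by (simp add: HAs_mult_separable[OF homogeneous_delta] unit_counit_laws)
  also have "\<dots> = (\<Sum>rr\<in>UNIV. \<Sum>ee\<in>UNIV. \<Sum>pp\<in>UNIV. (u rr * m z1 i rr) * (u ee * eps ee) * (eps pp * mu z2 pp j))"
    apply (intro sum.cong refl)
    subgoal for rr ee pp by (cases "eps pp = 0"; cases "u rr = 0") (auto simp: eps_degree u_degree)
    done
  also have "\<dots> = delta (i, j) (z1, z2)"
    by (simp add: sum_product3 counit_left unit_right counit_unit delta_def)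
  finally show ?thesis .
qed

lemma et_low_mult_et_low: "alg_mult HAs (et_low eps i) (et_low eps j) (z1, z2) = m z1 i j * eps z2"
proof -
  have "alg_mult HAs (et_low eps i) (et_low eps j) (z1, z2)
      = (\<Sum>rr\<in>UNIV. \<Sum>ee\<in>UNIV. (-1) ^ (deg rr * deg z2 + deg rr * deg ee) * m z1 i rr * (eps ee * eps z2) * mu j rr ee)"
    unfolding generators_separable
    by (simp add: HAs_mult_separable[OF homogeneous_eps] unit_counit_laws)
  also have "\<dots> = (\<Sum>rr\<in>UNIV. m z1 i rr * eps z2 * (\<Sum>ee\<in>UNIV. eps ee * mu j rr ee))"
    unfolding sum_distrib_left
    apply (intro sum.cong refl)
    subgoal for rr ee by (cases "eps ee = 0"; cases "eps z2 = 0") (auto simp: eps_degree)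
    done
  also have "\<dots> = m z1 i j * eps z2"
    by (simp add: counit_right)
  finally show ?thesis .
qed

lemma et_up_mult_et_up: "alg_mult HAs (et_up u i) (et_up u j) (z1, z2) = (-1) ^ (deg i * deg j) * u z1 * mu z2 i j"
proof -
  have "alg_mult HAs (et_up u i) (et_up u j) (z1, z2)
      = (\<Sum>ee\<in>UNIV. \<Sum>pp\<in>UNIV. (-1) ^ (deg z1 * deg pp + deg z1 * deg ee + deg pp * deg j) *
           m i ee pp * (u z1 * u ee) * mu z2 pp j)"
    unfolding generators_separable
    by (simp add: HAs_mult_separable[OF homogeneous_delta] unit_counit_laws)
  also have "\<dots> = (\<Sum>pp\<in>UNIV. (-1) ^ (deg pp * deg j) * u z1 * mu z2 pp j * (\<Sum>ee\<in>UNIV. u ee * m i ee pp))"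
    apply (subst sum.swap)
    unfolding sum_distrib_left
    apply (intro sum.cong refl)
    subgoal for pp ee by (cases "u z1 = 0") (auto simp: u_degree)
    done
  also have "\<dots> = (-1) ^ (deg i * deg j) * u z1 * mu z2 i j"
    by (simp add: unit_left)
  finally show ?thesis .
qed

lemma et_up_mult_et_low:
  "alg_mult HAs (et_up u i) (et_low eps j) (z1, z2)
   = (\<Sum>ee\<in>UNIV. (-1) ^ (deg z1 * deg z2 + deg z1 * deg ee) * m i ee z2 * mu j z1 ee)"
  unfolding generators_separable
  by (simp add: HAs_mult_separable[OF homogeneous_eps] unit_counit_laws)

section \<open>The pentagon equations\<close>

abbreviation "mult3 \<equiv> prod3 (hdeg deg) (hdeg deg) (hdeg deg)"

lemmas legs_tensor_sum =
  leg12_tensor_sum[where d = deg] leg13_tensor_sum[where d = deg] leg23_tensor_sum[where d = deg]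

lemmas homogeneous_factors = homogeneous_generators
  homogeneous_alg_mult[OF parity_graded_HA] homogeneous_alg_mult[OF parity_graded_HAs]

lemmas unit_laws = HA_unit_left HA_unit_right HAs_unit_left HAs_unit_right

lemmas generator_products =
  e_up_mult_e_low e_up_mult_e_up e_low_mult_e_low e_low_mult_e_up
  et_low_mult_et_up et_low_mult_et_low et_up_mult_et_up et_up_mult_et_low

lemma pentagon_equations:
  fixes a b' :: nat
  defines "oA \<equiv> oneHA u eps" and "oAs \<equiv> oneHAs u eps"
    and "S \<equiv> S_el deg u eps" and "St \<equiv> St_el u eps"
    and "S1 \<equiv> S1_el deg u eps a b'" and "S2 \<equiv> S2_el deg u eps a b'"
  shows "mult3 HAs HA HA (mult3 HAs HA HA (leg12 oA S1) (leg13 oA S1)) (leg23 oAs S)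
         = mult3 HAs HA HA (leg23 oAs S) (leg12 oA S1)"
    and "mult3 HAs HAs HA (leg12 oA St) (leg23 oAs S1)
         = mult3 HAs HAs HA (mult3 HAs HAs HA (leg23 oAs S1) (leg13 oAs S1)) (leg12 oA St)"
    and "mult3 HA HA HAs (mult3 HA HA HAs (leg12 oAs S) (leg13 oA S2)) (leg23 oA S2)
         = mult3 HA HA HAs (leg23 oA S2) (leg12 oAs S)"
    and "mult3 HA HAs HAs (leg12 oAs S2) (leg23 oA St)
         = mult3 HA HAs HAs (mult3 HA HAs HAs (leg23 oA St) (leg13 oAs S2)) (leg12 oAs S2)"
    and "mult3 HAs HA HAs (mult3 HAs HA HAs (leg12 oAs S1) (leg13 oA St)) (leg23 oAs S2)
         = mult3 HAs HA HAs (leg23 oAs S2) (leg12 oAs S1)"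
    and "mult3 HA HAs HA (leg12 oA S2) (leg23 oA S1)
         = mult3 HA HAs HA (mult3 HA HAs HA (leg23 oA S1) (leg13 oAs S)) (leg12 oA S2)"
    and "mult3 HAs HAs HAs (leg12 oAs St) (leg23 oAs St)
         = mult3 HAs HAs HAs (mult3 HAs HAs HAs (leg23 oAs St) (leg13 oAs St)) (leg12 oAs St)"
  unfolding assms canonical_elements_tensor_sum legs_tensor_sum
  apply (simp_all add: prod3_bilinear prod3_htensor3 homogeneous_factors unit_laws)
  apply (simp_all add: fun_eq_iff htensor3_def generator_products)
  apply (simp_all add: e_up_def e_low_def et_low_def et_up_def delta_pair delta_def
      sum_distrib_left sum_distrib_right)
  \<comment> \<open>Termwise, simp leaves: some factor vanishes, or the two signs agree. The
      nonvanishing factors fix the parities that make the signs agree.\<close>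
  apply (intro allI sum.cong refl; simp add: mult_ac; simp only: disj_imp; intro impI;
      auto simp: minus_one_power_iff dest!: m_even_iff mu_even_iff eps_degree u_degree)+
  done

end

theorem mainTheorem4:
  fixes deg :: "'i::finite \<Rightarrow> nat"
    and m mu :: "'i \<Rightarrow> 'i \<Rightarrow> 'i \<Rightarrow> complex"
    and u eps :: "'i \<Rightarrow> complex"
    and s :: "'i \<Rightarrow> 'i \<Rightarrow> complex"
    and a b' :: nat
  assumes hopf: "graded_hopf deg m mu u eps s"
  defines "dH \<equiv> hdeg deg"
      and "mA \<equiv> HA_mult deg m mu"
      and "mAs \<equiv> HAs_mult deg m mu"
      and "oA \<equiv> oneHA u eps"
      and "oAs \<equiv> oneHAs u eps"
      and "S \<equiv> S_el deg u eps"
      and "St \<equiv> St_el u eps"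
      and "S1 \<equiv> S1_el deg u eps a b'"
      and "S2 \<equiv> S2_el deg u eps a b'"
  shows
   "prod3 dH dH dH mAs mA mA (prod3 dH dH dH mAs mA mA (leg12 oA S1) (leg13 oA S1)) (leg23 oAs S)
      = prod3 dH dH dH mAs mA mA (leg23 oAs S) (leg12 oA S1)
  \<and> prod3 dH dH dH mAs mAs mA (leg12 oA St) (leg23 oAs S1)
      = prod3 dH dH dH mAs mAs mA (prod3 dH dH dH mAs mAs mA (leg23 oAs S1) (leg13 oAs S1)) (leg12 oA St)
  \<and> prod3 dH dH dH mA mA mAs (prod3 dH dH dH mA mA mAs (leg12 oAs S) (leg13 oA S2)) (leg23 oA S2)
      = prod3 dH dH dH mA mA mAs (leg23 oA S2) (leg12 oAs S)
  \<and> prod3 dH dH dH mA mAs mAs (leg12 oAs S2) (leg23 oA St)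
      = prod3 dH dH dH mA mAs mAs (prod3 dH dH dH mA mAs mAs (leg23 oA St) (leg13 oAs S2)) (leg12 oAs S2)
  \<and> prod3 dH dH dH mAs mA mAs (prod3 dH dH dH mAs mA mAs (leg12 oAs S1) (leg13 oA St)) (leg23 oAs S2)
      = prod3 dH dH dH mAs mA mAs (leg23 oAs S2) (leg12 oAs S1)
  \<and> prod3 dH dH dH mA mAs mA (leg12 oA S2) (leg23 oA S1)
      = prod3 dH dH dH mA mAs mA (prod3 dH dH dH mA mAs mA (leg23 oA S1) (leg13 oAs S)) (leg12 oA S2)
  \<and> prod3 dH dH dH mAs mAs mAs (leg12 oAs St) (leg23 oAs St)
      = prod3 dH dH dH mAs mAs mAs (prod3 dH dH dH mAs mAs mAs (leg23 oAs St) (leg13 oAs St)) (leg12 oAs St)"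
proof -
  interpret graded_biunital deg m mu u eps
    using hopf by (rule graded_hopf_biunital)
  show ?thesis
    unfolding dH_def mA_def mAs_def oA_def oAs_def S_def St_def S1_def S2_def
    using pentagon_equations by blast
qed

end
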